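(* Let $(X,\mathcal{A},p)$ be a standard Borel probability space, and let $(e_\lambda)_{\lambda\in\Lambda}$ and $(f_\lambda)_{\lambda\in\Lambda}$ be nets (indexed by the same directed set) of measure-preserving, $p$-a.s. idempotent Markov kernels on $(X,\mathcal{A},p)$, converging in the one-sided topology to kernels $e$ and $f$ respectively. If $e_\lambda\le f_\lambda$ for all $\lambda$, then $e\le f$.
   Context: Kernels are identified up to $p$-a.s. equality; composition $(h\circ k)(C\mid x)=\int h(C\mid y)k(dy\mid x)$; $e$ is a.s. idempotent if $e\circ e=e$ a.s. Order: $e\le f$ iff $e\circ f=f\circ e=e$ a.s. One-sided topology: $k_\lambda\to k$ iff $\int_X|k(B\mid x)-k_\lambda(B\mid x)|\,p(dx)\to0$ for every $B\in\mathcal{A}$. *)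

theory Defs
  imports "HOL-Probability.Probability"
begin

definition markov_kernel :: "'a measure \<Rightarrow> ('a \<Rightarrow> 'a measure) \<Rightarrow> bool" where
  "markov_kernel p k \<longleftrightarrow> k \<in> measurable p (prob_algebra p)"

definition kernel_measure_preserving :: "'a measure \<Rightarrow> ('a \<Rightarrow> 'a measure) \<Rightarrow> bool" where
  "kernel_measure_preserving p k \<longleftrightarrow>
     (\<forall>B\<in>sets p. (\<integral>x. measure (k x) B \<partial>p) = measure p B)"

text \<open>Composition (h o k)(C|x) = integral of h(C|y) k(dy|x).\<close>
definition kcomp :: "('a \<Rightarrow> 'a measure) \<Rightarrow> ('a \<Rightarrow> 'a measure) \<Rightarrow> ('a \<Rightarrow> 'a measure)" where
  "kcomp h k = (\<lambda>x. k x \<bind> h)"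

definition kernel_ae_eq :: "'a measure \<Rightarrow> ('a \<Rightarrow> 'a measure) \<Rightarrow> ('a \<Rightarrow> 'a measure) \<Rightarrow> bool" where
  "kernel_ae_eq p k1 k2 \<longleftrightarrow> (\<forall>B\<in>sets p. AE x in p. measure (k1 x) B = measure (k2 x) B)"

definition kernel_idempotent :: "'a measure \<Rightarrow> ('a \<Rightarrow> 'a measure) \<Rightarrow> bool" where
  "kernel_idempotent p e \<longleftrightarrow> kernel_ae_eq p (kcomp e e) e"

definition kernel_le :: "'a measure \<Rightarrow> ('a \<Rightarrow> 'a measure) \<Rightarrow> ('a \<Rightarrow> 'a measure) \<Rightarrow> bool" where
  "kernel_le p e f \<longleftrightarrow> kernel_ae_eq p (kcomp e f) e \<and> kernel_ae_eq p (kcomp f e) e"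

definition directed_set :: "'i set \<Rightarrow> ('i \<Rightarrow> 'i \<Rightarrow> bool) \<Rightarrow> bool" where
  "directed_set \<Lambda> R \<longleftrightarrow> \<Lambda> \<noteq> {} \<and> (\<forall>a\<in>\<Lambda>. R a a) \<and>
     (\<forall>a\<in>\<Lambda>. \<forall>b\<in>\<Lambda>. \<forall>c\<in>\<Lambda>. R a b \<longrightarrow> R b c \<longrightarrow> R a c) \<and>
     (\<forall>a\<in>\<Lambda>. \<forall>b\<in>\<Lambda>. \<exists>c\<in>\<Lambda>. R a c \<and> R b c)"

definition one_sided_conv ::
  "'a measure \<Rightarrow> 'i set \<Rightarrow> ('i \<Rightarrow> 'i \<Rightarrow> bool) \<Rightarrow> ('i \<Rightarrow> 'a \<Rightarrow> 'a measure) \<Rightarrow> ('a \<Rightarrow> 'a measure) \<Rightarrow> bool" where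
  "one_sided_conv p \<Lambda> R kn k \<longleftrightarrow>
     (\<forall>B\<in>sets p. \<forall>\<epsilon>>0. \<exists>l0\<in>\<Lambda>. \<forall>l\<in>\<Lambda>. R l0 l \<longrightarrow>
        (\<integral>x. \<bar>measure (k x) B - measure (kn l x) B\<bar> \<partial>p) < \<epsilon>)"

end

theory Submission
  imports Defs
begin

(*
  Composition (h, k) |-> h o k is
  continuous in the one-sided topology along nets whose right factor is measure preserving, and
  one-sided limits are unique up to p-a.s. equality.  Since e_l o f_l = e_l a.s., the net e_l o f_l
  converges both to e o f and to e, so e o f = e a.s.; symmetrically f_l o e_l = e_l gives f o e = e.

  For the continuity, integrate
    |(h o k)(B|x) - (h_l o k_l)(B|x)|
      <= |int h(B|.) dk(.|x) - int h(B|.) dk_l(.|x)| + int |h(B|.) - h_l(B|.)| dk_l(.|x)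
  against p.  Measure preservation of k_l turns the last term into int |h(B|.) - h_l(B|.)| dp,
  and the first term tends to 0 because h(B|.) lies within 1/n of the step function
  (1/n) sum_i 1{h(B|.) >= i/n}, whose level sets are where one-sided convergence k_l -> k applies.
*)

lemma markov_kernel_prob_space:
  assumes "markov_kernel p k" "x \<in> space p"
  shows "prob_space (k x)"
  using measurable_space[OF assms(1)[unfolded markov_kernel_def] assms(2)]
  by (simp add: space_prob_algebra)

lemma markov_kernel_sets:
  assumes "markov_kernel p k" "x \<in> space p"
  shows "sets (k x) = sets p"
  using measurable_space[OF assms(1)[unfolded markov_kernel_def] assms(2)]
  by (simp add: space_prob_algebra)

lemma markov_kernel_space:
  assumes "markov_kernel p k" "x \<in> space p"
  shows "space (k x) = space p"
  using markov_kernel_sets[OF assms] by (rule sets_eq_imp_space_eq)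

lemma markov_kernel_subprob_algebra:
  "markov_kernel p k \<Longrightarrow> k \<in> measurable p (subprob_algebra p)"
  unfolding markov_kernel_def by (rule measurable_prob_algebraD)

lemma borel_measurable_markov_kernel:
  assumes "markov_kernel p k" "x \<in> space p" "g \<in> borel_measurable p"
  shows "g \<in> borel_measurable (k x)"
  using assms(3) markov_kernel_sets[OF assms(1,2)] by (simp cong: measurable_cong_sets)

lemma measurable_kernel_measure:
  assumes "markov_kernel p k" "B \<in> sets p"
  shows "(\<lambda>x. measure (k x) B) \<in> borel_measurable p"
  using assms unfolding markov_kernel_def by measurable

lemma measurable_kernel_integral:
  fixes g :: "'a \<Rightarrow> real"
  assumes "markov_kernel p k" "g \<in> borel_measurable p"
  shows "(\<lambda>x. \<integral>y. g y \<partial>k x) \<in> borel_measurable p"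
  using measurable_compose[OF markov_kernel_subprob_algebra[OF assms(1)]
      integral_measurable_subprob_algebra[OF assms(2)]] .

lemma markov_kernel_kcomp:
  "markov_kernel p h \<Longrightarrow> markov_kernel p k \<Longrightarrow> markov_kernel p (kcomp h k)"
  unfolding markov_kernel_def kcomp_def by (rule measurable_bind_prob_space)

lemma measure_kcomp:
  assumes "markov_kernel p h" "markov_kernel p k" "x \<in> space p" "C \<in> sets p"
  shows "measure (kcomp h k x) C = (\<integral>y. measure (h y) C \<partial>k x)"
proof -
  interpret prob_space "k x" using markov_kernel_prob_space[OF assms(2,3)] .
  have "h \<in> measurable (k x) (subprob_algebra p)"
    using markov_kernel_subprob_algebra[OF assms(1)] markov_kernel_sets[OF assms(2,3)]
    by (simp cong: measurable_cong_sets)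
  then show ?thesis unfolding kcomp_def using assms(4) by (rule measure_bind)
qed

lemma abs_kernel_measure_le_1:
  assumes "markov_kernel p k" "x \<in> space p"
  shows "\<bar>measure (k x) B\<bar> \<le> 1"
  using prob_space.prob_le_1[OF markov_kernel_prob_space[OF assms]] by simp

lemma (in finite_measure) integrable_bounded:
  fixes f :: "'a \<Rightarrow> real"
  assumes "f \<in> borel_measurable M" "\<And>x. x \<in> space M \<Longrightarrow> \<bar>f x\<bar> \<le> c"
  shows "integrable M f"
  using assms by (intro integrable_const_bound[where B=c]) auto

lemma (in prob_space) abs_integral_le_bound:
  fixes f :: "'a \<Rightarrow> real"
  assumes "f \<in> borel_measurable M" "\<And>x. x \<in> space M \<Longrightarrow> \<bar>f x\<bar> \<le> c"
  shows "\<bar>\<integral>x. f x \<partial>M\<bar> \<le> c"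
proof -
  have "\<bar>\<integral>x. f x \<partial>M\<bar> \<le> (\<integral>x. \<bar>f x\<bar> \<partial>M)"
    using integral_norm_bound[of M f] by simp
  also have "\<dots> \<le> c"
    using assms by (intro integral_le_const integrable_bounded[where c=c] AE_I2) auto
  finally show ?thesis .
qed

lemma integrable_markov_kernel:
  fixes g :: "'a \<Rightarrow> real"
  assumes "markov_kernel p k" "x \<in> space p" "g \<in> borel_measurable p"
    and "\<And>y. y \<in> space p \<Longrightarrow> \<bar>g y\<bar> \<le> c"
  shows "integrable (k x) g"
proof -
  interpret prob_space "k x" using markov_kernel_prob_space[OF assms(1,2)] .
  show ?thesis
    using assms markov_kernel_space[OF assms(1,2)]
    by (intro integrable_bounded borel_measurable_markov_kernel) auto
qed

lemma abs_kernel_integral_le_bound: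
  fixes g :: "'a \<Rightarrow> real"
  assumes "markov_kernel p k" "x \<in> space p" "g \<in> borel_measurable p"
    and "\<And>y. y \<in> space p \<Longrightarrow> \<bar>g y\<bar> \<le> c"
  shows "\<bar>\<integral>y. g y \<partial>k x\<bar> \<le> c"
  using assms markov_kernel_space[OF assms(1,2)]
  by (intro prob_space.abs_integral_le_bound[OF markov_kernel_prob_space[OF assms(1,2)]]
      borel_measurable_markov_kernel) auto

lemma bind_kernel_measure_preserving:
  assumes "prob_space p" "markov_kernel p k" "kernel_measure_preserving p k"
  shows "p \<bind> k = p"
proof -
  interpret prob_space p by fact
  have k: "k \<in> measurable p (subprob_algebra p)"
    using assms(2) by (rule markov_kernel_subprob_algebra)
  interpret pk: prob_space "p \<bind> k"
    using assms(2) by (intro prob_space_bind[OF _ k] AE_I2 markov_kernel_prob_space)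
  show ?thesis
  proof (rule measure_eqI)
    show sets: "sets (p \<bind> k) = sets p"
      using k not_empty by (rule sets_bind_measurable)
    fix A assume "A \<in> sets (p \<bind> k)"
    then have "A \<in> sets p" using sets by simp
    then have "measure (p \<bind> k) A = measure p A"
      using measure_bind[OF k] assms(3) unfolding kernel_measure_preserving_def by simp
    then show "emeasure (p \<bind> k) A = emeasure p A"
      by (simp add: emeasure_eq_measure pk.emeasure_eq_measure)
  qed
qed

lemma integral_kernel_measure_preserving:
  fixes g :: "'a \<Rightarrow> real"
  assumes "prob_space p" "markov_kernel p k" "kernel_measure_preserving p k"
    and "g \<in> borel_measurable p" "\<And>y. y \<in> space p \<Longrightarrow> \<bar>g y\<bar> \<le> c"
  shows "(\<integral>x. (\<integral>y. g y \<partial>k x) \<partial>p) = (\<integral>y. g y \<partial>p)"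
proof -
  interpret prob_space p by fact
  have "AE x in p. emeasure (k x) (space (k x)) \<le> 1"
    using prob_space.emeasure_space_1[OF markov_kernel_prob_space[OF assms(2)]] by (intro AE_I2) simp
  then have "(\<integral>y. g y \<partial>(p \<bind> k)) = (\<integral>x. (\<integral>y. g y \<partial>k x) \<partial>p)"
    using integral_bind[OF assms(4,5) markov_kernel_subprob_algebra[OF assms(2)] finite_measure_axioms] by (metis ennreal_1)
  then show ?thesis using bind_kernel_measure_preserving[OF assms(1-3)] by simp
qed

definition net_filter :: "'i set \<Rightarrow> ('i \<Rightarrow> 'i \<Rightarrow> bool) \<Rightarrow> 'i filter" where
  "net_filter \<Lambda> R = (INF l0\<in>\<Lambda>. principal {l\<in>\<Lambda>. R l0 l})"

lemma eventually_net_filter: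
  assumes "directed_set \<Lambda> R"
  shows "eventually P (net_filter \<Lambda> R) \<longleftrightarrow> (\<exists>l0\<in>\<Lambda>. \<forall>l\<in>\<Lambda>. R l0 l \<longrightarrow> P l)"
proof -
  have "eventually P (net_filter \<Lambda> R) \<longleftrightarrow> (\<exists>l0\<in>\<Lambda>. eventually P (principal {l\<in>\<Lambda>. R l0 l}))"
    unfolding net_filter_def
  proof (rule eventually_INF_base)
    show "\<Lambda> \<noteq> {}" using assms by (simp add: directed_set_def)
    fix a b assume "a \<in> \<Lambda>" "b \<in> \<Lambda>"
    then obtain c where "c \<in> \<Lambda>" "R a c" "R b c"
      using assms unfolding directed_set_def by blast
    moreover have "{l\<in>\<Lambda>. R c l} \<subseteq> {l\<in>\<Lambda>. R a l} \<inter> {l\<in>\<Lambda>. R b l}"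
      using assms \<open>a \<in> \<Lambda>\<close> \<open>b \<in> \<Lambda>\<close> calculation unfolding directed_set_def by blast
    ultimately show "\<exists>c\<in>\<Lambda>. principal {l\<in>\<Lambda>. R c l} \<le>
        inf (principal {l\<in>\<Lambda>. R a l}) (principal {l\<in>\<Lambda>. R b l})"
      by auto
  qed
  then show ?thesis by (simp add: eventually_principal) blast
qed

lemma net_filter_nontrivial:
  assumes "directed_set \<Lambda> R"
  shows "net_filter \<Lambda> R \<noteq> bot"
  using assms unfolding trivial_limit_def eventually_net_filter[OF assms] directed_set_def
  by blast

lemma eventually_in_net_filter:
  assumes "directed_set \<Lambda> R"
  shows "eventually (\<lambda>l. l \<in> \<Lambda>) (net_filter \<Lambda> R)"
  using assms unfolding eventually_net_filter[OF assms] directed_set_def by blast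

lemma one_sided_conv_iff_tendsto:
  assumes "directed_set \<Lambda> R"
  shows "one_sided_conv p \<Lambda> R kn k \<longleftrightarrow> (\<forall>B\<in>sets p.
    ((\<lambda>l. \<integral>x. \<bar>measure (k x) B - measure (kn l x) B\<bar> \<partial>p) \<longlongrightarrow> 0) (net_filter \<Lambda> R))"
  unfolding one_sided_conv_def tendsto_iff eventually_net_filter[OF assms]
  by (simp add: dist_real_def)

lemma card_atLeastAtMost_le_real:
  assumes "0 \<le> x" "x \<le> real n"
  shows "card {i\<in>{1..n}. real i \<le> x} = nat \<lfloor>x\<rfloor>"
proof -
  have "{i\<in>{1..n}. real i \<le> x} = {1..nat \<lfloor>x\<rfloor>}"
    using assms by auto linarith+
  then show ?thesis by simp
qed

lemma (in prob_space) integral_layer_approx: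
  fixes g :: "'a \<Rightarrow> real"
  assumes g: "g \<in> borel_measurable M" "\<And>y. y \<in> space M \<Longrightarrow> 0 \<le> g y \<and> g y \<le> 1"
    and "n > 0"
  shows "\<bar>(\<integral>y. g y \<partial>M) - (\<Sum>i=1..n. prob {y\<in>space M. real i \<le> real n * g y}) / real n\<bar>
    \<le> 1 / real n"
proof -
  define A where "A i = {y\<in>space M. real i \<le> real n * g y}" for i
  have A: "A i \<in> events" for i unfolding A_def using g(1) by measurable
  define s where "s y = (\<Sum>i=1..n. indicator (A i) y) / real n" for y
  have s: "s \<in> borel_measurable M" unfolding s_def using A by measurable
  have approx: "\<bar>g y - s y\<bar> \<le> 1 / real n" if y: "y \<in> space M" for y
  proof -
    have "0 \<le> real n * g y" "real n * g y \<le> real n"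
      using g(2)[OF y] by (auto simp: mult_left_le)
    have "(\<Sum>i=1..n. indicator (A i) y :: real) = card {i\<in>{1..n}. real i \<le> real n * g y}"
      using y by (simp add: A_def indicator_def sum.inter_filter[symmetric] Int_def conj_commute)
    also have "\<dots> = nat \<lfloor>real n * g y\<rfloor>"
      using \<open>0 \<le> real n * g y\<close> \<open>real n * g y \<le> real n\<close> by (simp only: card_atLeastAtMost_le_real)
    finally have "g y - s y = (real n * g y - nat \<lfloor>real n * g y\<rfloor>) / real n"
      using \<open>n > 0\<close> by (simp add: s_def field_simps)
    moreover have "\<bar>real n * g y - nat \<lfloor>real n * g y\<rfloor>\<bar> \<le> 1"
      using \<open>0 \<le> real n * g y\<close> by linarith
    ultimately show ?thesis
      by (simp add: abs_divide divide_right_mono)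
  qed
  have "\<bar>\<integral>y. g y - s y \<partial>M\<bar> \<le> 1 / real n"
    using g(1) s approx by (intro abs_integral_le_bound) auto
  moreover have "(\<integral>y. s y \<partial>M) = (\<Sum>i=1..n. prob (A i)) / real n"
    unfolding s_def using A
    by (subst integral_divide_zero, subst Bochner_Integration.integral_sum)
       (auto simp: emeasure_eq_measure)
  moreover have "integrable M g"
    using g by (intro integrable_bounded[where c=1]) auto
  moreover have "integrable M s"
    unfolding s_def using A
    by (intro integrable_divide_zero Bochner_Integration.integrable_sum integrable_real_indicator)
       (auto simp: emeasure_eq_measure)
  ultimately show ?thesis by (simp add: A_def)
qed

lemma integrable_abs_kernel_measure_diff:
  assumes "prob_space p" "markov_kernel p k" "markov_kernel p k'" "B \<in> sets p"
  shows "integrable p (\<lambda>x. \<bar>measure (k x) B - measure (k' x) B\<bar>)"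
proof -
  interpret prob_space p by fact
  have "\<bar>\<bar>measure (k x) B - measure (k' x) B\<bar>\<bar> \<le> 2" if "x \<in> space p" for x
    using abs_kernel_measure_le_1[OF assms(2) that, of B] abs_kernel_measure_le_1[OF assms(3) that, of B]
    by linarith
  then show ?thesis
    using measurable_kernel_measure[OF assms(2,4)] measurable_kernel_measure[OF assms(3,4)]
    by (intro integrable_bounded[where c=2]) auto
qed

lemma integral_kernel_integral_diff_le_layers:
  fixes g :: "'a \<Rightarrow> real"
  assumes P: "prob_space p" and k: "markov_kernel p k" and k': "markov_kernel p k'"
    and g: "g \<in> borel_measurable p" "\<And>y. y \<in> space p \<Longrightarrow> 0 \<le> g y \<and> g y \<le> 1"
    and "n > 0"
  defines "A i \<equiv> {y\<in>space p. real i \<le> real n * g y}"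
  shows "(\<integral>x. \<bar>(\<integral>y. g y \<partial>k x) - (\<integral>y. g y \<partial>k' x)\<bar> \<partial>p)
    \<le> 2 / real n + (\<Sum>i=1..n. \<integral>x. \<bar>measure (k x) (A i) - measure (k' x) (A i)\<bar> \<partial>p) / real n"
proof -
  interpret prob_space p by fact
  have A: "A i \<in> sets p" for i unfolding A_def using g(1) by measurable
  have layers: "\<bar>(\<integral>y. g y \<partial>K x) - (\<Sum>i=1..n. measure (K x) (A i)) / real n\<bar> \<le> 1 / real n"
    if "markov_kernel p K" "x \<in> space p" for K x
    using prob_space.integral_layer_approx[OF markov_kernel_prob_space[OF that] _ _ \<open>n > 0\<close>]
      borel_measurable_markov_kernel[OF that g(1)] g(2)
    by (simp add: A_def markov_kernel_space[OF that])
  have "\<bar>(\<integral>y. g y \<partial>k x) - (\<integral>y. g y \<partial>k' x)\<bar>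
      \<le> 2 / real n + (\<Sum>i=1..n. \<bar>measure (k x) (A i) - measure (k' x) (A i)\<bar>) / real n"
    if x: "x \<in> space p" for x
  proof -
    have "\<bar>(\<Sum>i=1..n. measure (k x) (A i)) / real n - (\<Sum>i=1..n. measure (k' x) (A i)) / real n\<bar>
        \<le> (\<Sum>i=1..n. \<bar>measure (k x) (A i) - measure (k' x) (A i)\<bar>) / real n"
      by (simp add: diff_divide_distrib[symmetric] sum_subtractf[symmetric] abs_divide
          divide_right_mono sum_abs)
    then show ?thesis
      using layers[OF k x] layers[OF k' x] by (simp add: add_divide_distrib)
  qed
  moreover have int: "integrable p (\<lambda>x. \<bar>measure (k x) (A i) - measure (k' x) (A i)\<bar>)" for i
    using P k k' A by (rule integrable_abs_kernel_measure_diff)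
  ultimately have "(\<integral>x. \<bar>(\<integral>y. g y \<partial>k x) - (\<integral>y. g y \<partial>k' x)\<bar> \<partial>p)
      \<le> (\<integral>x. 2 / real n + (\<Sum>i=1..n. \<bar>measure (k x) (A i) - measure (k' x) (A i)\<bar>) / real n \<partial>p)"
    by (intro integral_mono') (auto intro: sum_nonneg)
  also have "\<dots> = 2 / real n + (\<Sum>i=1..n. \<integral>x. \<bar>measure (k x) (A i) - measure (k' x) (A i)\<bar> \<partial>p) / real n"
    using int by (simp add: prob_space Bochner_Integration.integral_sum)
  finally show ?thesis .
qed

lemma tendsto_kernel_integral:
  fixes g :: "'a \<Rightarrow> real"
  assumes P: "prob_space p" and dir: "directed_set \<Lambda> R"
    and k: "markov_kernel p k" and kn: "\<And>l. l \<in> \<Lambda> \<Longrightarrow> markov_kernel p (kn l)"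
    and conv: "one_sided_conv p \<Lambda> R kn k"
    and g: "g \<in> borel_measurable p" "\<And>y. y \<in> space p \<Longrightarrow> 0 \<le> g y \<and> g y \<le> 1"
  shows "((\<lambda>l. \<integral>x. \<bar>(\<integral>y. g y \<partial>k x) - (\<integral>y. g y \<partial>kn l x)\<bar> \<partial>p) \<longlongrightarrow> 0) (net_filter \<Lambda> R)"
proof (rule tendstoI)
  fix \<epsilon> :: real assume "\<epsilon> > 0"
  obtain n :: nat where "2 / \<epsilon> < real n" using reals_Archimedean2 by blast
  moreover have "0 < 2 / \<epsilon>" using \<open>\<epsilon> > 0\<close> by simp
  ultimately have "n > 0" using of_nat_0_less_iff by fastforce
  with \<open>2 / \<epsilon> < real n\<close> \<open>\<epsilon> > 0\<close> have "2 / real n < \<epsilon>"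
    by (simp add: field_simps)
  define A where "A i = {y\<in>space p. real i \<le> real n * g y}" for i
  have A: "A i \<in> sets p" for i unfolding A_def using g(1) by measurable
  define D where "D l = (\<Sum>i=1..n. \<integral>x. \<bar>measure (k x) (A i) - measure (kn l x) (A i)\<bar> \<partial>p) / real n"
    for l
  have "(D \<longlongrightarrow> 0) (net_filter \<Lambda> R)"
    using conv A unfolding D_def one_sided_conv_iff_tendsto[OF dir]
    by (intro tendsto_divide_zero tendsto_null_sum) auto
  then have "eventually (\<lambda>l. D l < \<epsilon> - 2 / real n) (net_filter \<Lambda> R)"
    using \<open>2 / real n < \<epsilon>\<close> by (intro order_tendstoD(2)) auto
  with eventually_in_net_filter[OF dir]
  show "eventually (\<lambda>l. dist (\<integral>x. \<bar>(\<integral>y. g y \<partial>k x) - (\<integral>y. g y \<partial>kn l x)\<bar> \<partial>p) 0 < \<epsilon>)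
      (net_filter \<Lambda> R)"
  proof eventually_elim
    case (elim l)
    then show ?case
      using integral_kernel_integral_diff_le_layers[OF P k kn[OF elim(1)] g \<open>n > 0\<close>]
      by (simp add: D_def A_def)
  qed
qed

lemma abs_kcomp_diff_le:
  assumes h: "markov_kernel p h" and h': "markov_kernel p h'"
    and k: "markov_kernel p k" and k': "markov_kernel p k'"
    and x: "x \<in> space p" and B: "B \<in> sets p"
  shows "\<bar>measure (kcomp h k x) B - measure (kcomp h' k' x) B\<bar>
    \<le> \<bar>(\<integral>y. measure (h y) B \<partial>k x) - (\<integral>y. measure (h y) B \<partial>k' x)\<bar>
      + (\<integral>y. \<bar>measure (h y) B - measure (h' y) B\<bar> \<partial>k' x)"
proof -
  have "integrable (k' x) (\<lambda>y. measure (K y) B)" if "markov_kernel p K" for K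
    using measurable_kernel_measure[OF that B] abs_kernel_measure_le_1[OF that]
    by (rule integrable_markov_kernel[OF k' x])
  then have "(\<integral>y. measure (h y) B \<partial>k' x) - (\<integral>y. measure (h' y) B \<partial>k' x)
      = (\<integral>y. measure (h y) B - measure (h' y) B \<partial>k' x)"
    using h h' by simp
  moreover have "\<bar>\<integral>y. measure (h y) B - measure (h' y) B \<partial>k' x\<bar>
      \<le> (\<integral>y. \<bar>measure (h y) B - measure (h' y) B\<bar> \<partial>k' x)"
    using integral_norm_bound[of "k' x" "\<lambda>y. measure (h y) B - measure (h' y) B"] by simp
  ultimately show ?thesis
    using measure_kcomp[OF h k x B] measure_kcomp[OF h' k' x B] by linarith
qed

lemma integral_abs_kcomp_diff_le:
  assumes P: "prob_space p" and h: "markov_kernel p h" and h': "markov_kernel p h'"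
    and k: "markov_kernel p k" and k': "markov_kernel p k'"
    and k'_preserving: "kernel_measure_preserving p k'" and B: "B \<in> sets p"
  shows "(\<integral>x. \<bar>measure (kcomp h k x) B - measure (kcomp h' k' x) B\<bar> \<partial>p)
    \<le> (\<integral>x. \<bar>(\<integral>y. measure (h y) B \<partial>k x) - (\<integral>y. measure (h y) B \<partial>k' x)\<bar> \<partial>p)
      + (\<integral>y. \<bar>measure (h y) B - measure (h' y) B\<bar> \<partial>p)"
proof -
  interpret prob_space p by fact
  define g where "g y = measure (h y) B" for y
  define d where "d y = \<bar>measure (h y) B - measure (h' y) B\<bar>" for y
  have g: "g \<in> borel_measurable p" "\<And>y. y \<in> space p \<Longrightarrow> \<bar>g y\<bar> \<le> 1"
    unfolding g_def using measurable_kernel_measure[OF h B] abs_kernel_measure_le_1[OF h] by auto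
  have d: "d \<in> borel_measurable p" "\<And>y. y \<in> space p \<Longrightarrow> \<bar>d y\<bar> \<le> 2"
  proof -
    show "d \<in> borel_measurable p"
      unfolding d_def using measurable_kernel_measure[OF h B] measurable_kernel_measure[OF h' B]
      by measurable
    show "\<bar>d y\<bar> \<le> 2" if "y \<in> space p" for y
      unfolding d_def using abs_kernel_measure_le_1[OF h that, of B] abs_kernel_measure_le_1[OF h' that, of B]
      by linarith
  qed
  have int1: "integrable p (\<lambda>x. \<bar>(\<integral>y. g y \<partial>k x) - (\<integral>y. g y \<partial>k' x)\<bar>)"
  proof (rule integrable_bounded[where c=2])
    show "\<bar>\<bar>(\<integral>y. g y \<partial>k x) - (\<integral>y. g y \<partial>k' x)\<bar>\<bar> \<le> 2" if x: "x \<in> space p" for x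
      using abs_kernel_integral_le_bound[OF k x g] abs_kernel_integral_le_bound[OF k' x g] by linarith
  qed (use measurable_kernel_integral[OF k g(1)] measurable_kernel_integral[OF k' g(1)] in simp)
  have int2: "integrable p (\<lambda>x. \<integral>y. d y \<partial>k' x)"
    using d by (intro integrable_bounded[where c=2] measurable_kernel_integral[OF k']
        abs_kernel_integral_le_bound[OF k']) auto
  have "(\<integral>x. \<bar>measure (kcomp h k x) B - measure (kcomp h' k' x) B\<bar> \<partial>p)
      \<le> (\<integral>x. \<bar>(\<integral>y. g y \<partial>k x) - (\<integral>y. g y \<partial>k' x)\<bar> + (\<integral>y. d y \<partial>k' x) \<partial>p)"
    using abs_kcomp_diff_le[OF h h' k k' _ B]
    by (intro integral_mono' Bochner_Integration.integrable_add int1 int2) (auto simp: g_def d_def)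
  also have "\<dots> = (\<integral>x. \<bar>(\<integral>y. g y \<partial>k x) - (\<integral>y. g y \<partial>k' x)\<bar> \<partial>p) + (\<integral>x. (\<integral>y. d y \<partial>k' x) \<partial>p)"
    using int1 int2 by simp
  also have "(\<integral>x. (\<integral>y. d y \<partial>k' x) \<partial>p) = (\<integral>y. d y \<partial>p)"
    using d by (rule integral_kernel_measure_preserving[OF P k' k'_preserving])
  finally show ?thesis unfolding g_def d_def .
qed

lemma one_sided_conv_kcomp:
  assumes P: "prob_space p" and dir: "directed_set \<Lambda> R"
    and h: "markov_kernel p h" and k: "markov_kernel p k"
    and hn: "\<And>l. l \<in> \<Lambda> \<Longrightarrow> markov_kernel p (hn l)"
    and kn: "\<And>l. l \<in> \<Lambda> \<Longrightarrow> markov_kernel p (kn l)"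
    and kn_preserving: "\<And>l. l \<in> \<Lambda> \<Longrightarrow> kernel_measure_preserving p (kn l)"
    and conv_h: "one_sided_conv p \<Lambda> R hn h" and conv_k: "one_sided_conv p \<Lambda> R kn k"
  shows "one_sided_conv p \<Lambda> R (\<lambda>l. kcomp (hn l) (kn l)) (kcomp h k)"
  unfolding one_sided_conv_iff_tendsto[OF dir]
proof
  fix B assume B: "B \<in> sets p"
  define T1 where "T1 l = (\<integral>x. \<bar>(\<integral>y. measure (h y) B \<partial>k x) - (\<integral>y. measure (h y) B \<partial>kn l x)\<bar> \<partial>p)"
    for l
  define T2 where "T2 l = (\<integral>y. \<bar>measure (h y) B - measure (hn l y) B\<bar> \<partial>p)" for l
  have "(T1 \<longlongrightarrow> 0) (net_filter \<Lambda> R)"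
    unfolding T1_def using measurable_kernel_measure[OF h B] abs_kernel_measure_le_1[OF h]
    by (intro tendsto_kernel_integral[OF P dir k kn conv_k]) auto
  moreover have "(T2 \<longlongrightarrow> 0) (net_filter \<Lambda> R)"
    using conv_h B unfolding T2_def one_sided_conv_iff_tendsto[OF dir] by blast
  ultimately have upper: "((\<lambda>l. T1 l + T2 l) \<longlongrightarrow> 0) (net_filter \<Lambda> R)"
    using tendsto_add by fastforce
  have "eventually (\<lambda>l. (\<integral>x. \<bar>measure (kcomp h k x) B - measure (kcomp (hn l) (kn l) x) B\<bar> \<partial>p)
      \<le> T1 l + T2 l) (net_filter \<Lambda> R)"
    using eventually_in_net_filter[OF dir] unfolding T1_def T2_def
    by (rule eventually_mono) (rule integral_abs_kcomp_diff_le[OF P h hn k kn kn_preserving B])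
  then show "((\<lambda>l. \<integral>x. \<bar>measure (kcomp h k x) B - measure (kcomp (hn l) (kn l) x) B\<bar> \<partial>p)
      \<longlongrightarrow> 0) (net_filter \<Lambda> R)"
    by (intro tendsto_sandwich[OF always_eventually _ tendsto_const upper]) simp_all
qed

lemma one_sided_conv_unique:
  assumes P: "prob_space p" and dir: "directed_set \<Lambda> R"
    and k: "markov_kernel p k" and k': "markov_kernel p k'"
    and kn: "\<And>l. l \<in> \<Lambda> \<Longrightarrow> markov_kernel p (kn l)"
    and conv: "one_sided_conv p \<Lambda> R kn k" and conv': "one_sided_conv p \<Lambda> R kn k'"
  shows "kernel_ae_eq p k k'"
  unfolding kernel_ae_eq_def
proof
  fix B assume B: "B \<in> sets p"
  define T where "T K l = (\<integral>x. \<bar>measure (K x) B - measure (kn l x) B\<bar> \<partial>p)" for K l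
  have int: "integrable p (\<lambda>x. \<bar>measure (k x) B - measure (k' x) B\<bar>)"
    using P k k' B by (rule integrable_abs_kernel_measure_diff)
  have "(\<integral>x. \<bar>measure (k x) B - measure (k' x) B\<bar> \<partial>p) \<le> T k l + T k' l" if l: "l \<in> \<Lambda>" for l
  proof -
    have "(\<integral>x. \<bar>measure (k x) B - measure (k' x) B\<bar> \<partial>p)
        \<le> (\<integral>x. \<bar>measure (k x) B - measure (kn l x) B\<bar> + \<bar>measure (k' x) B - measure (kn l x) B\<bar> \<partial>p)"
      using integrable_abs_kernel_measure_diff[OF P k kn[OF l] B]
        integrable_abs_kernel_measure_diff[OF P k' kn[OF l] B]
      by (intro integral_mono[OF int]) auto
    then show ?thesis
      using integrable_abs_kernel_measure_diff[OF P k kn[OF l] B]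
        integrable_abs_kernel_measure_diff[OF P k' kn[OF l] B]
      by (simp add: T_def)
  qed
  moreover have "((\<lambda>l. T k l + T k' l) \<longlongrightarrow> 0) (net_filter \<Lambda> R)"
    using conv conv' B tendsto_add unfolding T_def one_sided_conv_iff_tendsto[OF dir] by fastforce
  ultimately have "(\<integral>x. \<bar>measure (k x) B - measure (k' x) B\<bar> \<partial>p) \<le> 0"
    using eventually_in_net_filter[OF dir]
    by (intro tendsto_le[OF net_filter_nontrivial[OF dir] _ tendsto_const]) (auto elim: eventually_mono)
  then have "(\<integral>x. \<bar>measure (k x) B - measure (k' x) B\<bar> \<partial>p) = 0"
    by (simp add: order_antisym)
  then show "AE x in p. measure (k x) B = measure (k' x) B"
    by (subst (asm) integral_nonneg_eq_0_iff_AE[OF int]) auto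
qed

lemma one_sided_conv_ae_cong:
  assumes k: "markov_kernel p k"
    and kn: "\<And>l. l \<in> \<Lambda> \<Longrightarrow> markov_kernel p (kn l)"
    and jn: "\<And>l. l \<in> \<Lambda> \<Longrightarrow> markov_kernel p (jn l)"
    and eq: "\<And>l. l \<in> \<Lambda> \<Longrightarrow> kernel_ae_eq p (jn l) (kn l)"
    and conv: "one_sided_conv p \<Lambda> R kn k"
  shows "one_sided_conv p \<Lambda> R jn k"
proof -
  have same_distance: "(\<integral>x. \<bar>measure (k x) B - measure (jn l x) B\<bar> \<partial>p)
      = (\<integral>x. \<bar>measure (k x) B - measure (kn l x) B\<bar> \<partial>p)"
    if "l \<in> \<Lambda>" "B \<in> sets p" for l B
    using eq[OF that(1)] that(2) measurable_kernel_measure[OF k that(2)]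
      measurable_kernel_measure[OF kn[OF that(1)] that(2)] measurable_kernel_measure[OF jn[OF that(1)] that(2)]
    unfolding kernel_ae_eq_def by (intro integral_cong_AE) auto
  from conv show ?thesis
    unfolding one_sided_conv_def by (simp add: same_distance)
qed

lemma kernel_ae_eq_kcomp_limit:
  assumes P: "prob_space p" and dir: "directed_set \<Lambda> R"
    and h: "markov_kernel p h" and k: "markov_kernel p k" and j: "markov_kernel p j"
    and hn: "\<And>l. l \<in> \<Lambda> \<Longrightarrow> markov_kernel p (hn l)"
    and kn: "\<And>l. l \<in> \<Lambda> \<Longrightarrow> markov_kernel p (kn l)"
    and kn_preserving: "\<And>l. l \<in> \<Lambda> \<Longrightarrow> kernel_measure_preserving p (kn l)"
    and jn: "\<And>l. l \<in> \<Lambda> \<Longrightarrow> markov_kernel p (jn l)"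
    and eq: "\<And>l. l \<in> \<Lambda> \<Longrightarrow> kernel_ae_eq p (kcomp (hn l) (kn l)) (jn l)"
    and conv_h: "one_sided_conv p \<Lambda> R hn h" and conv_k: "one_sided_conv p \<Lambda> R kn k"
    and conv_j: "one_sided_conv p \<Lambda> R jn j"
  shows "kernel_ae_eq p (kcomp h k) j"
proof (rule one_sided_conv_unique[OF P dir markov_kernel_kcomp[OF h k] j])
  show "one_sided_conv p \<Lambda> R (\<lambda>l. kcomp (hn l) (kn l)) (kcomp h k)"
    by (rule one_sided_conv_kcomp[OF P dir h k hn kn kn_preserving conv_h conv_k])
  show "one_sided_conv p \<Lambda> R (\<lambda>l. kcomp (hn l) (kn l)) j"
    by (rule one_sided_conv_ae_cong[OF j jn markov_kernel_kcomp[OF hn kn] eq conv_j])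
qed (rule markov_kernel_kcomp[OF hn kn])

theorem proposition5p11:
  fixes p :: "'a::polish_space measure"
    and \<Lambda> :: "'i set" and R :: "'i \<Rightarrow> 'i \<Rightarrow> bool"
    and en fn :: "'i \<Rightarrow> 'a \<Rightarrow> 'a measure" and e f :: "'a \<Rightarrow> 'a measure"
  assumes "prob_space p" and "sets p = sets borel"
    and "directed_set \<Lambda> R"
    and "\<And>l. l \<in> \<Lambda> \<Longrightarrow> markov_kernel p (en l) \<and> kernel_measure_preserving p (en l) \<and> kernel_idempotent p (en l)"
    and "\<And>l. l \<in> \<Lambda> \<Longrightarrow> markov_kernel p (fn l) \<and> kernel_measure_preserving p (fn l) \<and> kernel_idempotent p (fn l)"
    and "markov_kernel p e" and "markov_kernel p f"
    and "one_sided_conv p \<Lambda> R en e" and "one_sided_conv p \<Lambda> R fn f"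
    and "\<And>l. l \<in> \<Lambda> \<Longrightarrow> kernel_le p (en l) (fn l)"
  shows "kernel_le p e f"
proof -
  have en: "markov_kernel p (en l)" "kernel_measure_preserving p (en l)"
    and fn: "markov_kernel p (fn l)" "kernel_measure_preserving p (fn l)" if "l \<in> \<Lambda>" for l
    using assms(4,5)[OF that] by auto
  have le: "kernel_ae_eq p (kcomp (en l) (fn l)) (en l)" "kernel_ae_eq p (kcomp (fn l) (en l)) (en l)"
    if "l \<in> \<Lambda>" for l
    using assms(10)[OF that] unfolding kernel_le_def by auto
  have "kernel_ae_eq p (kcomp e f) e"
    by (rule kernel_ae_eq_kcomp_limit[OF assms(1,3,6,7,6) en(1) fn(1,2) en(1) le(1) assms(8,9,8)])
  moreover have "kernel_ae_eq p (kcomp f e) e"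
    by (rule kernel_ae_eq_kcomp_limit[OF assms(1,3,7,6,6) fn(1) en(1,2) en(1) le(2) assms(9,8,8)])
  ultimately show ?thesis
    unfolding kernel_le_def ..
qed

end
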